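(* Let $(H,h)$ be an equivariant pair with $h(\infty)=\infty$, regarded as a homeomorphism $h:\mathbb{C}\to\mathbb{C}$. For $X\subset\mathbb{C}$ let $\alpha(X)$ be the supremum of $\sum_i\mathrm{area}(D_i)$ over all finite collections $\{D_i\}$ of pairwise disjoint disks contained in $X$, and for each closed interval $J\subset[0,1]$ let $A(J)=\alpha(h([0,1]\times J))$. Suppose $y\in(0,1)$ is a stiff point for $A$, i.e. there is some $N$ such that no closed interval $J\subset[0,1]$ centered at $y$ satisfies $A(J)\ge N|J|$. Then for every real linear projection $\pi:\mathbb{C}\to\mathbb{R}$, the function $t\mapsto\pi(h(t,y))$, $t\in[0,1]$, is absolutely continuous.
   Context: $\mathbb{H}^3$ is the upper half space model $\mathbb{C}\times(0,\infty)$ of hyperbolic $3$-space with ideal boundary $S=\mathbb{C}\cup\{\infty\}$; $\mathcal{I}$ is its isometry group, acting also on $S$ by conformal transformations. A nice lattice is a subgroup $\Gamma\subset\mathcal{I}$ acting freely, properly discontinuously and cocompactly on $\mathbb{H}^3$. An equivariant pair $(H,h)$ consists of a bi-Lipschitz bijection $H:\mathbb{H}^3\to\mathbb{H}^3$ and a homeomorphism $h:S\to S$ such that $H\cup h$ is continuous on $\mathbb{H}^3\cup S$, with nice lattices $\Gamma_1,\Gamma_2$ satisfying $H\Gamma_1H^{-1}=\Gamma_2$, $h\Gamma_1h^{-1}=\Gamma_2$. Points of $\mathbb{C}$ are written $(x,y)=x+iy$; $|J|$ is the length of $J$. *)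

theory Defs
  imports "HOL-Analysis.Analysis"
begin

text \<open>Points of H^3 are pairs (z,t) with z complex and t > 0.
  Points of the ideal boundary S are elements of complex option, None being infinity.\<close>

definition H3 :: "(complex \<times> real) set" where
  "H3 = {(z, t). t > 0}"

definition hdist :: "complex \<times> real \<Rightarrow> complex \<times> real \<Rightarrow> real" where
  "hdist p q = arcosh (1 + ((cmod (fst p - fst q))\<^sup>2 + (snd p - snd q)\<^sup>2) / (2 * snd p * snd q))"

text \<open>Inverse stereographic projection of R^3 \<union> {\<infinity>} onto the unit sphere of R^4;
  it induces the topology of the compactification H^3 \<union> S.\<close>

definition stereo :: "complex \<times> real \<Rightarrow> complex \<times> real \<times> real" where
  "stereo p = (let n = (cmod (fst p))\<^sup>2 + (snd p)\<^sup>2 in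
     (of_real (2 / (1 + n)) * fst p, 2 * snd p / (1 + n), (n - 1) / (n + 1)))"

definition embS :: "complex option \<Rightarrow> complex \<times> real \<times> real" where
  "embS \<xi> = (case \<xi> of None \<Rightarrow> (0, 0, 1) | Some z \<Rightarrow> stereo (z, 0))"

type_synonym clpt = "(complex \<times> real) + complex option"

definition Cl :: "clpt set" where
  "Cl = Inl ` H3 \<union> range Inr"

definition emb :: "clpt \<Rightarrow> complex \<times> real \<times> real" where
  "emb x = (case x of Inl p \<Rightarrow> stereo p | Inr \<xi> \<Rightarrow> embS \<xi>)"

definition pairmap :: "(complex \<times> real \<Rightarrow> complex \<times> real) \<Rightarrow> (complex option \<Rightarrow> complex option) \<Rightarrow> clpt \<Rightarrow> clpt" where
  "pairmap F f x = (case x of Inl p \<Rightarrow> Inl (F p) | Inr \<xi> \<Rightarrow> Inr (f \<xi>))"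

text \<open>Continuity of F \<union> f on H^3 \<union> S (sequential continuity in a metrizable space).\<close>
definition cont_closure :: "(complex \<times> real \<Rightarrow> complex \<times> real) \<Rightarrow> (complex option \<Rightarrow> complex option) \<Rightarrow> bool" where
  "cont_closure F f \<longleftrightarrow>
     (\<forall>x\<in>Cl. \<forall>\<sigma>. (\<forall>n. \<sigma> n \<in> Cl) \<longrightarrow> (\<lambda>n. emb (\<sigma> n)) \<longlonglongrightarrow> emb x
        \<longrightarrow> (\<lambda>n. emb (pairmap F f (\<sigma> n))) \<longlonglongrightarrow> emb (pairmap F f x))"

definition contS :: "(complex option \<Rightarrow> complex option) \<Rightarrow> bool" where
  "contS f \<longleftrightarrow> (\<forall>\<xi> \<sigma>. (\<lambda>n. embS (\<sigma> n)) \<longlonglongrightarrow> embS \<xi> \<longrightarrow> (\<lambda>n. embS (f (\<sigma> n))) \<longlonglongrightarrow> embS (f \<xi>))"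

definition homeoS :: "(complex option \<Rightarrow> complex option) \<Rightarrow> bool" where
  "homeoS f \<longleftrightarrow> bij f \<and> contS f \<and> contS (inv f)"

text \<open>An element of the isometry group is a pair (g, gS): g an isometry of H^3
  (extended by the identity outside H^3, so that it is uniquely determined), and gS its
  (unique) continuous extension to the ideal boundary.\<close>

definition isom_grp :: "((complex \<times> real \<Rightarrow> complex \<times> real) \<times> (complex option \<Rightarrow> complex option)) set" where
  "isom_grp = {(g, gS). bij_betw g H3 H3 \<and> (\<forall>p\<in>H3. \<forall>q\<in>H3. hdist (g p) (g q) = hdist p q)
      \<and> (\<forall>p. p \<notin> H3 \<longrightarrow> g p = p) \<and> bij gS \<and> cont_closure g gS}"

definition compose_pair where
  "compose_pair a b = (fst a \<circ> fst b, snd a \<circ> snd b)"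

definition nice_lattice :: "((complex \<times> real \<Rightarrow> complex \<times> real) \<times> (complex option \<Rightarrow> complex option)) set \<Rightarrow> bool" where
  "nice_lattice \<Gamma> \<longleftrightarrow>
     \<Gamma> \<subseteq> isom_grp \<and>
     (id, id) \<in> \<Gamma> \<and>
     (\<forall>a\<in>\<Gamma>. \<forall>b\<in>\<Gamma>. compose_pair a b \<in> \<Gamma>) \<and>
     (\<forall>a\<in>\<Gamma>. \<exists>b\<in>\<Gamma>. compose_pair a b = (id, id)) \<and>
     \<comment> \<open>acts freely on H^3\<close>
     (\<forall>\<gamma>\<in>\<Gamma>. \<gamma> \<noteq> (id, id) \<longrightarrow> (\<forall>p\<in>H3. fst \<gamma> p \<noteq> p)) \<and>
     \<comment> \<open>properly discontinuously\<close>
     (\<forall>K. compact K \<and> K \<subseteq> H3 \<longrightarrow> finite {\<gamma>\<in>\<Gamma>. fst \<gamma> ` K \<inter> K \<noteq> {}}) \<and>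
     \<comment> \<open>cocompactly\<close>
     (\<exists>K. compact K \<and> K \<subseteq> H3 \<and> (\<Union>\<gamma>\<in>\<Gamma>. fst \<gamma> ` K) = H3)"

definition bilipschitz_H3 :: "(complex \<times> real \<Rightarrow> complex \<times> real) \<Rightarrow> bool" where
  "bilipschitz_H3 H \<longleftrightarrow> bij_betw H H3 H3 \<and>
     (\<exists>L\<ge>1. \<forall>p\<in>H3. \<forall>q\<in>H3. hdist p q / L \<le> hdist (H p) (H q) \<and> hdist (H p) (H q) \<le> L * hdist p q)"

definition conj_rel where
  "conj_rel H h \<gamma> \<gamma>' \<longleftrightarrow> (\<forall>p\<in>H3. H (fst \<gamma> p) = fst \<gamma>' (H p)) \<and> (\<forall>\<xi>. h (snd \<gamma> \<xi>) = snd \<gamma>' (h \<xi>))"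

definition equivariant_pair :: "(complex \<times> real \<Rightarrow> complex \<times> real) \<Rightarrow> (complex option \<Rightarrow> complex option) \<Rightarrow> bool" where
  "equivariant_pair H h \<longleftrightarrow> bilipschitz_H3 H \<and> homeoS h \<and> cont_closure H h \<and>
     (\<exists>\<Gamma>1 \<Gamma>2. nice_lattice \<Gamma>1 \<and> nice_lattice \<Gamma>2 \<and>
        (\<forall>\<gamma>\<in>\<Gamma>1. \<exists>\<gamma>'\<in>\<Gamma>2. conj_rel H h \<gamma> \<gamma>') \<and>
        (\<forall>\<gamma>'\<in>\<Gamma>2. \<exists>\<gamma>\<in>\<Gamma>1. conj_rel H h \<gamma> \<gamma>'))"

definition disk_alpha :: "complex set \<Rightarrow> real" where
  "disk_alpha X = Sup {(\<Sum>i<n. pi * (r i)\<^sup>2) | (n::nat) c r.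
       (\<forall>i<n. r i > 0 \<and> ball (c i) (r i) \<subseteq> X) \<and>
       (\<forall>i<n. \<forall>j<n. i \<noteq> j \<longrightarrow> ball (c i) (r i) \<inter> ball (c j) (r j) = {})}"

definition rect :: "real set \<Rightarrow> complex set" where
  "rect J = {Complex x y | x y. x \<in> {0..1} \<and> y \<in> J}"

definition stiff_point :: "(real set \<Rightarrow> real) \<Rightarrow> real \<Rightarrow> bool" where
  "stiff_point A y \<longleftrightarrow> (\<exists>N::real. \<not> (\<exists>a b. 0 \<le> a \<and> a < b \<and> b \<le> 1 \<and> (a + b) / 2 = y
        \<and> A {a..b} \<ge> N * (b - a)))"

definition abs_cont_on :: "real \<Rightarrow> real \<Rightarrow> (real \<Rightarrow> real) \<Rightarrow> bool" where
  "abs_cont_on a b f \<longleftrightarrow> (\<forall>\<epsilon>>0. \<exists>\<delta>>0. \<forall>n (u::nat\<Rightarrow>real) v.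
      (\<forall>i<n. a \<le> u i \<and> u i \<le> v i \<and> v i \<le> b) \<and>
      (\<forall>i<n. \<forall>j<n. i \<noteq> j \<longrightarrow> v i \<le> u j \<or> v j \<le> u i) \<and>
      (\<Sum>i<n. v i - u i) < \<delta> \<longrightarrow> (\<Sum>i<n. \<bar>f (v i) - f (u i)\<bar>) < \<epsilon>)"

end

theory Submission
  imports Defs "HOL-Real_Asymp.Real_Asymp"
begin

text \<open>The boundary map \<open>h\<close> is weakly quasisymmetric. Cross-ratios of boundary points are
  invariant under isometries, and since the lattice acts cocompactly every triple \<open>z, c, w\<close>
  with \<open>|z - c| \<le> |w - c|\<close> can be moved so that it is seen from a point of a fixed compact set
  under visual angles bounded below; by compactness and continuity of \<open>h\<close> the cross-ratios of
  the images of such configurations are bounded.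

  Weak quasisymmetry turns disjoint subintervals \<open>[u, v]\<close> of \<open>[0, 1] \<times> {y}\<close> of length at
  most \<open>2s\<close> into disjoint disks of radius \<open>|h v - h u| / 2K\<close> inside
  \<open>h ([0, 1] \<times> [y - s, y + s])\<close>, so stiffness at \<open>y\<close> gives \<open>\<Sum> |h v - h u|\<^sup>2 \<le> C s\<close>.
  Cutting arbitrary disjoint intervals into pieces of comparable length \<open>s\<close> and applying
  Cauchy-Schwarz yields \<open>(\<Sum> |h v - h u|)\<^sup>2 \<le> C \<Sum> (v - u)\<close>, and absolute continuity
  follows.\<close>

section \<open>Visual ratios and cross-ratios on the sphere at infinity\<close>

text \<open>For \<open>P = (c, r) \<in> H3\<close> and boundary points \<open>X, Y\<close>, \<open>visual_ratio (stereo P) X Y\<close> is a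
  quarter of the squared chordal distance of \<open>X\<close> and \<open>Y\<close> after an isometry has moved \<open>P\<close> to
  \<open>(0, 1)\<close>.\<close>

definition visual_ratio ::
    "complex \<times> real \<times> real \<Rightarrow> complex \<times> real \<times> real \<Rightarrow> complex \<times> real \<times> real \<Rightarrow> real" where
  "visual_ratio Q X Y = (fst (snd Q))\<^sup>2 * (dist X Y)\<^sup>2 / ((dist X Q)\<^sup>2 * (dist Y Q)\<^sup>2)"

definition cross_ratio ::
    "complex \<times> real \<times> real \<Rightarrow> complex \<times> real \<times> real \<Rightarrow> complex \<times> real \<times> real \<Rightarrow> complex \<times> real \<times> real \<Rightarrow> real" where
  "cross_ratio A B C E = (dist A B)\<^sup>2 * (dist C E)\<^sup>2 / ((dist C B)\<^sup>2 * (dist A E)\<^sup>2)"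

lemma one_plus_norm_sq_pos: "0 < 1 + (norm x)\<^sup>2"
  by (simp add: add_pos_nonneg)

lemma stereo_eq:
  "stereo p = (of_real (2 / (1 + (norm p)\<^sup>2)) * fst p, 2 * snd p / (1 + (norm p)\<^sup>2), 1 - 2 / (1 + (norm p)\<^sup>2))"
proof -
  have "(norm p)\<^sup>2 = (cmod (fst p))\<^sup>2 + (snd p)\<^sup>2"
    by (cases p) (simp add: norm_Pair)
  with one_plus_norm_sq_pos[of p] show ?thesis
    by (simp add: stereo_def Let_def field_simps)
qed

lemma stereo_Complex:
  "stereo (Complex a b, t) =
    (let A = 1 + (a\<^sup>2 + b\<^sup>2 + t\<^sup>2) in (Complex (2 * a / A) (2 * b / A), 2 * t / A, 1 - 2 / A))"
  by (simp add: stereo_eq norm_Pair cmod_power2 Let_def complex_of_real_mult_Complex complex_eq_iff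
      del: of_real_divide)

lemma stereo_formulas:
  fixes p q :: "complex \<times> real"
  shows dist_stereo_sq:
      "(dist (stereo p) (stereo q))\<^sup>2 = 4 * (dist p q)\<^sup>2 / ((1 + (norm p)\<^sup>2) * (1 + (norm q)\<^sup>2))"
    and dist_stereo_north_sq: "(dist (stereo p) (0, 0, 1))\<^sup>2 = 4 / (1 + (norm p)\<^sup>2)"
    and height_stereo: "fst (snd (stereo p)) = 2 * snd p / (1 + (norm p)\<^sup>2)"
proof -
  obtain a b t c d s where pq: "p = (Complex a b, t)" "q = (Complex c d, s)"
    by (metis complex.exhaust_sel prod.collapse)
  have pos: "1 + (a\<^sup>2 + b\<^sup>2 + t\<^sup>2) > 0" "1 + (c\<^sup>2 + d\<^sup>2 + s\<^sup>2) > 0"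
    by (simp_all add: add_pos_nonneg)
  show "(dist (stereo p) (stereo q))\<^sup>2 = 4 * (dist p q)\<^sup>2 / ((1 + (norm p)\<^sup>2) * (1 + (norm q)\<^sup>2))"
    using pos unfolding stereo_Complex pq Let_def
    by (simp add: dist_Pair_Pair dist_norm norm_Pair cmod_power2 divide_simps) algebra
  show "(dist (stereo p) (0, 0, 1))\<^sup>2 = 4 / (1 + (norm p)\<^sup>2)"
    using pos unfolding stereo_Complex pq Let_def
    by (simp add: dist_Pair_Pair dist_norm norm_Pair cmod_power2 divide_simps) algebra
  show "fst (snd (stereo p)) = 2 * snd p / (1 + (norm p)\<^sup>2)"
    unfolding stereo_Complex pq Let_def by (simp add: norm_Pair cmod_power2 add.assoc)
qed

lemma visual_ratio_stereo:
  "visual_ratio (stereo P) (stereo p) (stereo q) = (snd P)\<^sup>2 * (dist p q)\<^sup>2 / ((dist p P)\<^sup>2 * (dist q P)\<^sup>2)"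
proof -
  define a b c where "a = 1 + (norm P)\<^sup>2" and "b = 1 + (norm p)\<^sup>2" and "c = 1 + (norm q)\<^sup>2"
  have "a > 0" "b > 0" "c > 0"
    unfolding a_def b_def c_def by (fact one_plus_norm_sq_pos)+
  then show ?thesis
    unfolding visual_ratio_def dist_stereo_sq height_stereo a_def[symmetric] b_def[symmetric] c_def[symmetric]
      dist_commute[of P]
    by (cases "p = P"; cases "q = P") (simp_all add: field_simps power2_eq_square)
qed

lemma visual_ratio_stereo_north:
  "visual_ratio (stereo P) (stereo p) (0, 0, 1) = (snd P)\<^sup>2 / (dist p P)\<^sup>2"
proof -
  define a b where "a = 1 + (norm P)\<^sup>2" and "b = 1 + (norm p)\<^sup>2"
  have "a > 0" "b > 0"
    unfolding a_def b_def by (fact one_plus_norm_sq_pos)+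
  then show ?thesis
    unfolding visual_ratio_def dist_stereo_sq dist_stereo_north_sq height_stereo dist_commute[of "(0, 0, 1)"]
      a_def[symmetric] b_def[symmetric] dist_commute[of P]
    by (cases "p = P") (simp_all add: field_simps power2_eq_square)
qed

lemma hdist_eq_arcosh: "hdist p q = arcosh (1 + (dist p q)\<^sup>2 / (2 * snd p * snd q))"
  by (cases p, cases q) (simp add: hdist_def dist_norm norm_Pair)

lemma isom_grp_H3: "(g, gS) \<in> isom_grp \<Longrightarrow> p \<in> H3 \<Longrightarrow> g p \<in> H3"
  by (auto simp: isom_grp_def bij_betw_def)

lemma isom_grp_preserves_dist_quotient:
  assumes "(g, gS) \<in> isom_grp" "p \<in> H3" "q \<in> H3"
  shows "(dist (g p) (g q))\<^sup>2 / (snd (g p) * snd (g q)) = (dist p q)\<^sup>2 / (snd p * snd q)"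
proof -
  have "g p \<in> H3" "g q \<in> H3" and hd: "hdist (g p) (g q) = hdist p q"
    using assms by (auto simp: isom_grp_def bij_betw_def)
  then have "snd (g p) * snd (g q) > 0" "snd p * snd q > 0"
    using assms by (auto simp: H3_def)
  then have "1 + (dist (g p) (g q))\<^sup>2 / (2 * snd (g p) * snd (g q)) = 1 + (dist p q)\<^sup>2 / (2 * snd p * snd q)"
    using arg_cong[OF hd, of cosh] unfolding hdist_eq_arcosh by (simp add: mult.assoc)
  then show ?thesis
    by (simp add: mult.assoc)
qed

lemma visual_ratio_isom_H3:
  assumes g: "(g, gS) \<in> isom_grp" and "P \<in> H3" "p \<in> H3" "q \<in> H3"
  shows "visual_ratio (stereo (g P)) (stereo (g p)) (stereo (g q)) = visual_ratio (stereo P) (stereo p) (stereo q)"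
proof -
  define \<delta> where "\<delta> x y = (dist x y)\<^sup>2 / (snd x * snd y)" for x y :: "complex \<times> real"
  have hyperbolic: "visual_ratio (stereo P) (stereo p) (stereo q) = \<delta> p q / (\<delta> p P * \<delta> q P)"
    if "P \<in> H3" "p \<in> H3" "q \<in> H3" for P p q
    using that unfolding visual_ratio_stereo \<delta>_def
    by (cases "p = P"; cases "q = P") (auto simp: H3_def field_simps power2_eq_square)
  have "g P \<in> H3" "g p \<in> H3" "g q \<in> H3"
    using isom_grp_H3[OF g] assms by blast+
  with assms show ?thesis
    by (simp add: hyperbolic \<delta>_def isom_grp_preserves_dist_quotient)
qed

lemma embS_Some [simp]: "embS (Some z) = stereo (z, 0)"
  and embS_None [simp]: "embS None = (0, 0, 1)"
  by (simp_all add: embS_def)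

lemma height_embS: "fst (snd (embS a)) = 0"
  by (cases a) (simp_all add: height_stereo)

lemma embS_neq_stereo_H3: "P \<in> H3 \<Longrightarrow> embS a \<noteq> stereo P"
  using one_plus_norm_sq_pos[of P] height_embS[of a] by (auto simp: H3_def height_stereo)

lemma continuous_stereo: "continuous_on UNIV stereo"
proof -
  have "1 + (norm p)\<^sup>2 \<noteq> 0" for p :: "complex \<times> real"
    using one_plus_norm_sq_pos[of p] by simp
  then show ?thesis
    unfolding stereo_eq[abs_def] by (intro continuous_intros) auto
qed

lemma embS_limit_of_H3: "\<exists>\<sigma>. (\<forall>n. \<sigma> n \<in> H3) \<and> (\<lambda>n. stereo (\<sigma> n)) \<longlonglongrightarrow> embS a"
proof (cases a)
  case None
  have "(\<lambda>n. 2 * (real n + 1) / (1 + (real n + 1)\<^sup>2)) \<longlonglongrightarrow> 0"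
    "(\<lambda>n. ((real n + 1)\<^sup>2 - 1) / ((real n + 1)\<^sup>2 + 1)) \<longlonglongrightarrow> 1"
    by real_asymp+
  then have "(\<lambda>n. stereo (0, real n + 1)) \<longlonglongrightarrow> (0, 0, 1)"
    unfolding stereo_def Let_def by (simp add: tendsto_Pair)
  with None show ?thesis
    by (intro exI[of _ "\<lambda>n. (0, real n + 1)"]) (simp add: H3_def)
next
  case (Some z)
  have "(\<lambda>n. (z, 1 / (real n + 1))) \<longlonglongrightarrow> (z, 0)"
    by (intro tendsto_intros) real_asymp
  then have "(\<lambda>n. stereo (z, 1 / (real n + 1))) \<longlonglongrightarrow> stereo (z, 0)"
    by (rule continuous_on_tendsto_compose[OF continuous_stereo]) auto
  with Some show ?thesis
    by (intro exI[of _ "\<lambda>n. (z, 1 / (real n + 1))"]) (simp add: H3_def)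
qed

lemma tendsto_visual_ratio:
  assumes "(Q \<longlongrightarrow> q) F" "(X \<longlongrightarrow> x) F" "(Y \<longlongrightarrow> y) F" "x \<noteq> q" "y \<noteq> q"
  shows "((\<lambda>n. visual_ratio (Q n) (X n) (Y n)) \<longlongrightarrow> visual_ratio q x y) F"
  unfolding visual_ratio_def using assms by (intro tendsto_intros) auto

lemma visual_ratio_isom:
  assumes g: "(g, gS) \<in> isom_grp" and P: "P \<in> H3"
  shows "visual_ratio (stereo (g P)) (embS (gS a)) (embS (gS b)) = visual_ratio (stereo P) (embS a) (embS b)"
proof -
  have gP: "g P \<in> H3"
    by (rule isom_grp_H3[OF g P])
  obtain \<sigma> \<tau> where \<sigma>: "\<forall>n. \<sigma> n \<in> H3" "(\<lambda>n. stereo (\<sigma> n)) \<longlonglongrightarrow> embS a"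
    and \<tau>: "\<forall>n. \<tau> n \<in> H3" "(\<lambda>n. stereo (\<tau> n)) \<longlonglongrightarrow> embS b"
    using embS_limit_of_H3 by metis
  have image_limit: "(\<lambda>n. stereo (g (\<rho> n))) \<longlonglongrightarrow> embS (gS c)"
    if "\<forall>n. \<rho> n \<in> H3" "(\<lambda>n. stereo (\<rho> n)) \<longlonglongrightarrow> embS c" for \<rho> c
  proof -
    have "cont_closure g gS"
      using g by (simp add: isom_grp_def)
    then have "(\<lambda>n. emb (pairmap g gS (Inl (\<rho> n)))) \<longlonglongrightarrow> emb (pairmap g gS (Inr c))"
      unfolding cont_closure_def using that by (auto simp: Cl_def emb_def)
    then show ?thesis
      by (simp add: emb_def pairmap_def)
  qed
  have "(\<lambda>n. visual_ratio (stereo (g P)) (stereo (g (\<sigma> n))) (stereo (g (\<tau> n))))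
      \<longlonglongrightarrow> visual_ratio (stereo (g P)) (embS (gS a)) (embS (gS b))"
    using gP by (intro tendsto_visual_ratio tendsto_const image_limit \<sigma> \<tau> embS_neq_stereo_H3)
  moreover have "(\<lambda>n. visual_ratio (stereo P) (stereo (\<sigma> n)) (stereo (\<tau> n)))
      \<longlonglongrightarrow> visual_ratio (stereo P) (embS a) (embS b)"
    using P by (intro tendsto_visual_ratio tendsto_const \<sigma> \<tau> embS_neq_stereo_H3)
  ultimately show ?thesis
    using visual_ratio_isom_H3[OF g P] \<sigma>(1) \<tau>(1) LIMSEQ_unique by simp
qed

lemma cross_ratio_eq_visual_ratios:
  assumes "fst (snd Q) \<noteq> 0" "A \<noteq> Q" "B \<noteq> Q" "C \<noteq> Q" "E \<noteq> Q"
  shows "cross_ratio A B C E = visual_ratio Q A B * visual_ratio Q C E / (visual_ratio Q C B * visual_ratio Q A E)"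
  using assms unfolding cross_ratio_def visual_ratio_def
  by (cases "C = B"; cases "A = E") (simp_all add: field_simps power2_eq_square)

lemma cross_ratio_isom:
  assumes g: "(g, gS) \<in> isom_grp"
  shows "cross_ratio (embS (gS a)) (embS (gS b)) (embS (gS c)) (embS (gS d))
       = cross_ratio (embS a) (embS b) (embS c) (embS d)"
proof -
  define P :: "complex \<times> real" where "P = (0, 1)"
  have P: "P \<in> H3"
    by (simp add: P_def H3_def)
  then have gP: "g P \<in> H3"
    by (rule isom_grp_H3[OF g])
  have height: "fst (snd (stereo Q)) \<noteq> 0" if "Q \<in> H3" for Q
    using that one_plus_norm_sq_pos[of Q] by (auto simp: H3_def height_stereo)
  have cr: "cross_ratio (embS a) (embS b) (embS c) (embS d) = visual_ratio (stereo Q) (embS a) (embS b)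
      * visual_ratio (stereo Q) (embS c) (embS d) / (visual_ratio (stereo Q) (embS c) (embS b)
      * visual_ratio (stereo Q) (embS a) (embS d))" if "Q \<in> H3" for Q a b c d
    using that by (intro cross_ratio_eq_visual_ratios height embS_neq_stereo_H3)
  show ?thesis
    by (simp add: cr[OF gP, of "gS a" "gS b" "gS c" "gS d"] cr[OF P, of a b c d] visual_ratio_isom[OF g P])
qed

lemma cross_ratio_finite_points:
  "cross_ratio (embS (Some z)) (embS (Some c)) (embS (Some w)) (embS None) = (cmod (z - c))\<^sup>2 / (cmod (w - c))\<^sup>2"
proof -
  have norm_sq: "(norm (u, 0::real))\<^sup>2 = (cmod u)\<^sup>2" and dist_sq: "(dist (u, 0::real) (v, 0))\<^sup>2 = (cmod (u - v))\<^sup>2"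
    for u v :: complex
    by (simp_all add: norm_Pair dist_Pair_Pair dist_norm)
  define a b e where "a = 1 + (cmod z)\<^sup>2" and "b = 1 + (cmod c)\<^sup>2" and "e = 1 + (cmod w)\<^sup>2"
  have "a > 0" "b > 0" "e > 0"
    unfolding a_def b_def e_def by (fact one_plus_norm_sq_pos)+
  then show ?thesis
    unfolding cross_ratio_def embS_Some embS_None dist_stereo_sq dist_stereo_north_sq norm_sq dist_sq
      a_def[symmetric] b_def[symmetric] e_def[symmetric] dist_commute[of "(0, 0, 1)"]
    by (cases "w = c") (simp_all add: field_simps power2_eq_square)
qed

lemma tendsto_cross_ratio:
  assumes "(A \<longlongrightarrow> a) F" "(B \<longlongrightarrow> b) F" "(C \<longlongrightarrow> c) F" "(E \<longlongrightarrow> e) F" "c \<noteq> b" "a \<noteq> e"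
  shows "((\<lambda>n. cross_ratio (A n) (B n) (C n) (E n)) \<longlongrightarrow> cross_ratio a b c e) F"
  unfolding cross_ratio_def using assms by (intro tendsto_intros) auto

lemma embS_Some_coords:
  obtains k where "k > 0" "k * (1 + (cmod z)\<^sup>2) = 2" "embS (Some z) = (of_real k * z, 0, 1 - k)"
proof
  have "0 < 1 + (cmod z)\<^sup>2"
    by (fact one_plus_norm_sq_pos)
  then show "2 / (1 + (cmod z)\<^sup>2) > 0" "2 / (1 + (cmod z)\<^sup>2) * (1 + (cmod z)\<^sup>2) = 2"
    by (simp_all add: field_simps)
  show "embS (Some z) = (of_real (2 / (1 + (cmod z)\<^sup>2)) * z, 0, 1 - 2 / (1 + (cmod z)\<^sup>2))"
    by (simp add: stereo_eq norm_Pair del: of_real_divide)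
qed

lemma inj_embS: "inj embS"
proof (rule injI)
  have recover: "a = (if snd (snd (embS a)) = 1 then None else Some (fst (embS a) / of_real (1 - snd (snd (embS a)))))"
    for a
  proof (cases a)
    case (Some z)
    obtain k where "k > 0" "embS (Some z) = (of_real k * z, 0, 1 - k)"
      using embS_Some_coords by metis
    with Some show ?thesis
      by simp
  qed simp
  show "embS a = embS b \<Longrightarrow> a = b" for a b
    using recover[of a] recover[of b] by metis
qed

lemma norm_embS: "norm (embS a) = 1"
proof (cases a)
  case (Some z)
  obtain k where k: "k > 0" "k * (1 + (cmod z)\<^sup>2) = 2" "embS (Some z) = (of_real k * z, 0, 1 - k)"
    using embS_Some_coords by metis
  then have "(norm (embS a))\<^sup>2 = k * (k * (cmod z)\<^sup>2) + (1 - k)\<^sup>2"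
    using Some by (simp add: norm_Pair norm_mult power_mult_distrib power2_eq_square)
  also have "\<dots> = k * (2 - k) + (1 - k)\<^sup>2"
    using k(2) by (simp add: algebra_simps flip: k(2))
  also have "\<dots> = 1"
    by (simp add: algebra_simps power2_eq_square)
  finally show ?thesis
    using power2_eq_iff_nonneg[of "norm (embS a)" 1] by simp
qed (simp add: norm_Pair)

lemma range_embS: "range embS = sphere 0 1 \<inter> {X. fst (snd X) = 0}"
proof (intro equalityI subsetI)
  fix X assume "X \<in> range embS"
  then show "X \<in> sphere 0 1 \<inter> {X. fst (snd X) = 0}"
    using norm_embS height_embS by auto
next
  fix X :: "complex \<times> real \<times> real"
  assume "X \<in> sphere 0 1 \<inter> {X. fst (snd X) = 0}"
  then obtain A x where X: "X = (A, 0, x)" and unit: "(cmod A)\<^sup>2 + x\<^sup>2 = 1"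
    by (cases X) (auto simp: norm_Pair)
  show "X \<in> range embS"
  proof (cases "x = 1")
    case True
    then show ?thesis
      using unit X by (intro range_eqI[of _ _ None]) simp
  next
    case False
    have "x < 1"
      using unit False by (smt (verit) zero_le_power2 power2_eq_square mult_le_cancel_left1)
    define z where "z = A / of_real (1 - x)"
    obtain k where k: "k * (1 + (cmod z)\<^sup>2) = 2" "embS (Some z) = (of_real k * z, 0, 1 - k)"
      using embS_Some_coords by metis
    have "cmod z = cmod A / (1 - x)"
      using \<open>x < 1\<close> by (simp add: z_def norm_divide del: of_real_diff)
    then have "(cmod z)\<^sup>2 = (1 - x\<^sup>2) / (1 - x)\<^sup>2"
      using unit by (simp add: power_divide)
    also have "\<dots> = (1 - x) * (1 + x) / ((1 - x) * (1 - x))"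
      by (simp add: algebra_simps power2_eq_square)
    also have "\<dots> = (1 + x) / (1 - x)"
      using \<open>x < 1\<close> by simp
    finally have "1 + (cmod z)\<^sup>2 = 2 / (1 - x)"
      using \<open>x < 1\<close> by (simp add: field_simps)
    moreover have "k = 2 / (1 + (cmod z)\<^sup>2)"
      using k(1) one_plus_norm_sq_pos[of z] by (simp add: eq_divide_eq)
    ultimately have "k = 1 - x"
      using \<open>x < 1\<close> by simp
    then have "embS (Some z) = X"
      using k(2) \<open>x < 1\<close> by (simp add: X z_def)
    then show ?thesis
      by (metis rangeI)
  qed
qed

lemma compact_range_embS: "compact (range embS)"
  unfolding range_embS
  by (intro compact_Int_closed compact_sphere closed_Collect_eq continuous_intros)

section \<open>Weak quasisymmetry of the boundary map\<close>

text \<open>Otherwise a subsequence of unbounded configurations converges; the lower bound on visual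
  ratios keeps the limit points of the pairs \<open>z, v\<close> and \<open>w, c\<close> distinct, so the image
  cross-ratios converge.\<close>

lemma cross_ratio_image_bounded:
  assumes h: "contS h" "inj h" and D: "compact D" "D \<subseteq> H3" and "e > 0"
  shows "\<exists>B. \<forall>k\<in>D. \<forall>z c w v. e \<le> visual_ratio (stereo k) (embS z) (embS v) \<longrightarrow>
    e \<le> visual_ratio (stereo k) (embS w) (embS c) \<longrightarrow>
    cross_ratio (embS (h z)) (embS (h c)) (embS (h w)) (embS (h v)) \<le> B"
proof (rule ccontr)
  assume "\<not> ?thesis"
  then have "\<forall>n::nat. \<exists>k z c w v. k \<in> D \<and> e \<le> visual_ratio (stereo k) (embS z) (embS v)
      \<and> e \<le> visual_ratio (stereo k) (embS w) (embS c)
      \<and> real n < cross_ratio (embS (h z)) (embS (h c)) (embS (h w)) (embS (h v))"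
    by (simp add: not_le Bex_def del: split_paired_Ex)
  then obtain k z c w v where kD: "\<And>n. k n \<in> D"
    and far: "\<And>n. e \<le> visual_ratio (stereo (k n)) (embS (z n)) (embS (v n))"
    "\<And>n. e \<le> visual_ratio (stereo (k n)) (embS (w n)) (embS (c n))"
    and large: "\<And>n. real n < cross_ratio (embS (h (z n))) (embS (h (c n))) (embS (h (w n))) (embS (h (v n)))"
    by metis
  define S where "S = range embS"
  have "compact (D \<times> S \<times> S \<times> S \<times> S)"
    unfolding S_def using D(1) compact_range_embS by (intro compact_Times)
  then have seq: "seq_compact (D \<times> S \<times> S \<times> S \<times> S)"
    by (rule compact_imp_seq_compact)
  have "\<forall>n. (k n, embS (z n), embS (c n), embS (w n), embS (v n)) \<in> D \<times> S \<times> S \<times> S \<times> S"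
    using kD by (simp add: S_def)
  then obtain l \<phi> where l: "l \<in> D \<times> S \<times> S \<times> S \<times> S" and \<phi>: "strict_mono \<phi>"
    and "((\<lambda>n. (k n, embS (z n), embS (c n), embS (w n), embS (v n))) \<circ> \<phi>) \<longlonglongrightarrow> l"
    by (rule seq_compactE[OF seq])
  then have lim: "(\<lambda>n. (k (\<phi> n), embS (z (\<phi> n)), embS (c (\<phi> n)), embS (w (\<phi> n)), embS (v (\<phi> n)))) \<longlonglongrightarrow> l"
    by (simp add: comp_def)
  from l obtain k0 z0 c0 w0 v0 where l_eq: "l = (k0, embS z0, embS c0, embS w0, embS v0)" and "k0 \<in> D"
    unfolding S_def by auto
  have k_lim: "(\<lambda>n. stereo (k (\<phi> n))) \<longlonglongrightarrow> stereo k0"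
    using tendsto_fst[OF lim] continuous_on_tendsto_compose[OF continuous_stereo] by (simp add: l_eq)
  have z_lim: "(\<lambda>n. embS (z (\<phi> n))) \<longlonglongrightarrow> embS z0" and c_lim: "(\<lambda>n. embS (c (\<phi> n))) \<longlonglongrightarrow> embS c0"
    and w_lim: "(\<lambda>n. embS (w (\<phi> n))) \<longlonglongrightarrow> embS w0" and v_lim: "(\<lambda>n. embS (v (\<phi> n))) \<longlonglongrightarrow> embS v0"
    using tendsto_fst[OF tendsto_snd[OF lim]] tendsto_fst[OF tendsto_snd[OF tendsto_snd[OF lim]]]
      tendsto_fst[OF tendsto_snd[OF tendsto_snd[OF tendsto_snd[OF lim]]]]
      tendsto_snd[OF tendsto_snd[OF tendsto_snd[OF tendsto_snd[OF lim]]]]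
    by (simp_all add: l_eq)
  have k0: "embS b \<noteq> stereo k0" for b
    using \<open>k0 \<in> D\<close> D(2) embS_neq_stereo_H3 by blast
  have distinct_limit: "x \<noteq> y" if "(\<lambda>n. visual_ratio (stereo (k (\<phi> n))) (embS (x' (\<phi> n))) (embS (y' (\<phi> n))))
      \<longlonglongrightarrow> visual_ratio (stereo k0) (embS x) (embS y)" "\<And>n. e \<le> visual_ratio (stereo (k n)) (embS (x' n)) (embS (y' n))"
    for x y x' y'
  proof
    assume "x = y"
    have "e \<le> visual_ratio (stereo k0) (embS x) (embS y)"
      using that by (intro LIMSEQ_le_const[OF that(1)]) auto
    with \<open>x = y\<close> \<open>e > 0\<close> show False
      by (simp add: visual_ratio_def)
  qed
  have "z0 \<noteq> v0"
    by (rule distinct_limit[OF tendsto_visual_ratio[OF k_lim z_lim v_lim k0 k0] far(1)])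
  have "w0 \<noteq> c0"
    by (rule distinct_limit[OF tendsto_visual_ratio[OF k_lim w_lim c_lim k0 k0] far(2)])
  have h_lim: "(\<lambda>n. embS (h (\<sigma> n))) \<longlonglongrightarrow> embS (h \<xi>)" if "(\<lambda>n. embS (\<sigma> n)) \<longlonglongrightarrow> embS \<xi>" for \<sigma> \<xi>
    using h(1) that unfolding contS_def by blast
  define CR where "CR n = cross_ratio (embS (h (z n))) (embS (h (c n))) (embS (h (w n))) (embS (h (v n)))" for n
  have "(\<lambda>n. CR (\<phi> n)) \<longlonglongrightarrow> cross_ratio (embS (h z0)) (embS (h c0)) (embS (h w0)) (embS (h v0))"
    unfolding CR_def using \<open>z0 \<noteq> v0\<close> \<open>w0 \<noteq> c0\<close> h(2) inj_embS
    by (intro tendsto_cross_ratio h_lim z_lim c_lim w_lim v_lim) (auto simp: inj_eq)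
  then have "Bseq (\<lambda>n. CR (\<phi> n))"
    by (rule convergent_imp_Bseq[OF convergentI])
  then obtain B where B: "\<And>n. CR (\<phi> n) \<le> B"
    by (elim BseqE) (metis abs_le_D1 real_norm_def)
  obtain n :: nat where "B < real n"
    using reals_Archimedean2 by blast
  moreover have "real n \<le> real (\<phi> n)"
    using seq_suble[OF \<phi>] by simp
  ultimately show False
    using B[of n] large[of "\<phi> n"] unfolding CR_def by linarith
qed

lemma visual_ratios_at_normalizing_point:
  assumes "cmod (z - c) \<le> cmod (w - c)" "w \<noteq> c"
  shows "1/2 \<le> visual_ratio (stereo (c, cmod (w - c))) (embS (Some z)) (embS None)"
    and "1/2 \<le> visual_ratio (stereo (c, cmod (w - c))) (embS (Some w)) (embS (Some c))"
proof -
  define r where "r = cmod (w - c)"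
  have r: "r > 0" "(cmod (z - c))\<^sup>2 \<le> r\<^sup>2"
    using assms by (simp_all add: r_def power_mono)
  have dist_sq: "(dist (u, 0) (c, r))\<^sup>2 = (cmod (u - c))\<^sup>2 + r\<^sup>2" for u
    by (simp add: dist_Pair_Pair dist_norm norm_Pair)
  have "0 < (cmod (z - c))\<^sup>2 + r\<^sup>2" "(cmod (z - c))\<^sup>2 + r\<^sup>2 \<le> 2 * r\<^sup>2"
    using r by (auto simp: add_nonneg_pos)
  then have "1/2 \<le> r\<^sup>2 / ((cmod (z - c))\<^sup>2 + r\<^sup>2)"
    by (simp add: le_divide_eq)
  then show "1/2 \<le> visual_ratio (stereo (c, r)) (embS (Some z)) (embS None)"
    by (simp add: visual_ratio_stereo_north dist_sq)
  have "(dist (w, 0::real) (c, 0))\<^sup>2 = r\<^sup>2"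
    by (simp add: dist_Pair_Pair dist_norm r_def)
  then have "visual_ratio (stereo (c, r)) (embS (Some w)) (embS (Some c)) = r\<^sup>2 * r\<^sup>2 / ((r\<^sup>2 + r\<^sup>2) * r\<^sup>2)"
    using dist_sq[of w] dist_sq[of c] by (simp add: visual_ratio_stereo r_def)
  then show "1/2 \<le> visual_ratio (stereo (c, r)) (embS (Some w)) (embS (Some c))"
    using r by simp
qed

lemma Some_the_of_inj_fix_None: "inj h \<Longrightarrow> h None = None \<Longrightarrow> h (Some z) = Some (the (h (Some z)))"
  by (metis injD option.collapse option.distinct(1))

lemma bij_the_Some:
  assumes "bij h" "h None = None"
  shows "bij (\<lambda>z. the (h (Some z)))"
proof -
  have "inj h" "surj h"
    using assms(1) by (simp_all add: bij_is_inj bij_is_surj)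
  have "inj (\<lambda>z. the (h (Some z)))"
  proof (rule injI)
    fix z w assume "the (h (Some z)) = the (h (Some w))"
    then have "h (Some z) = h (Some w)"
      using Some_the_of_inj_fix_None[OF \<open>inj h\<close> assms(2)] by metis
    then show "z = w"
      using \<open>inj h\<close> by (simp add: inj_eq)
  qed
  moreover have "w \<in> range (\<lambda>z. the (h (Some z)))" for w
  proof -
    obtain \<xi> where \<xi>: "h \<xi> = Some w"
      using \<open>surj h\<close> by (metis surjD)
    with assms(2) obtain z where "\<xi> = Some z"
      by (cases \<xi>) auto
    with \<xi> show ?thesis
      by (intro range_eqI[of _ _ z]) simp
  qed
  ultimately show ?thesis
    by (intro bijI) auto
qed

text \<open>The lattice moves \<open>(c, |w - c|)\<close> into the compact set \<open>D\<close>; seen from there, \<open>z, \<infinity>\<close>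
  and \<open>w, c\<close> are visually apart, and \<open>h\<close> conjugates the lattice to isometries, which preserve
  cross-ratios.\<close>

lemma boundary_cross_ratio_bounded:
  assumes h: "homeoS h" "h None = None"
    and \<Gamma>: "\<Gamma> \<subseteq> isom_grp" and D: "compact D" "D \<subseteq> H3" "(\<Union>\<gamma>\<in>\<Gamma>. fst \<gamma> ` D) = H3"
    and conj: "\<And>\<gamma>. \<gamma> \<in> \<Gamma> \<Longrightarrow> \<exists>\<gamma>'\<in>isom_grp. \<forall>\<xi>. h (snd \<gamma> \<xi>) = snd \<gamma>' (h \<xi>)"
  shows "\<exists>B. \<forall>z c w. cmod (z - c) \<le> cmod (w - c) \<longrightarrow> w \<noteq> c \<longrightarrow>
    cross_ratio (embS (h (Some z))) (embS (h (Some c))) (embS (h (Some w))) (embS (h None)) \<le> B"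
proof -
  have "inj h" "contS h"
    using h(1) by (auto simp: homeoS_def bij_is_inj)
  obtain B where B: "\<And>k z c w v. k \<in> D \<Longrightarrow> 1/2 \<le> visual_ratio (stereo k) (embS z) (embS v) \<Longrightarrow>
      1/2 \<le> visual_ratio (stereo k) (embS w) (embS c) \<Longrightarrow>
      cross_ratio (embS (h z)) (embS (h c)) (embS (h w)) (embS (h v)) \<le> B"
    using cross_ratio_image_bounded[OF \<open>contS h\<close> \<open>inj h\<close> D(1,2) half_gt_zero[OF zero_less_one]] by blast
  have "cross_ratio (embS (h (Some z))) (embS (h (Some c))) (embS (h (Some w))) (embS (h None)) \<le> B"
    if "cmod (z - c) \<le> cmod (w - c)" "w \<noteq> c" for z c w
  proof -
    have "(c, cmod (w - c)) \<in> H3"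
      using that by (simp add: H3_def)
    then obtain \<gamma> k where \<gamma>: "\<gamma> \<in> \<Gamma>" "k \<in> D" "(c, cmod (w - c)) = fst \<gamma> k"
      using D(3) by blast
    obtain \<gamma>' where \<gamma>': "(fst \<gamma>', snd \<gamma>') \<in> isom_grp" "\<And>\<xi>. h (snd \<gamma> \<xi>) = snd \<gamma>' (h \<xi>)"
      using conj[OF \<gamma>(1)] by auto
    have g: "(fst \<gamma>, snd \<gamma>) \<in> isom_grp"
      using \<Gamma> \<gamma>(1) by auto
    then have "surj (snd \<gamma>)"
      by (auto simp: isom_grp_def bij_is_surj split: prod.splits)
    define pre where "pre = inv (snd \<gamma>)"
    have pre: "snd \<gamma> (pre \<xi>) = \<xi>" for \<xi>
      unfolding pre_def by (rule surj_f_inv_f[OF \<open>surj (snd \<gamma>)\<close>])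
    have vr: "visual_ratio (stereo k) (embS (pre a)) (embS (pre b))
        = visual_ratio (stereo (c, cmod (w - c))) (embS a) (embS b)" for a b
      using visual_ratio_isom[OF g, of k "pre a" "pre b"] \<gamma>(2,3) D(2) by (auto simp: pre)
    have conj_pre: "h \<xi> = snd \<gamma>' (h (pre \<xi>))" for \<xi>
      by (metis \<gamma>'(2) pre)
    have "1/2 \<le> visual_ratio (stereo k) (embS (pre (Some z))) (embS (pre None))"
      "1/2 \<le> visual_ratio (stereo k) (embS (pre (Some w))) (embS (pre (Some c)))"
      using visual_ratios_at_normalizing_point[OF that] by (simp_all only: vr)
    then have "cross_ratio (embS (h (pre (Some z)))) (embS (h (pre (Some c))))
        (embS (h (pre (Some w)))) (embS (h (pre None))) \<le> B"
      using \<gamma>(2) by (intro B)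
    then show ?thesis
      unfolding conj_pre[of "Some z"] conj_pre[of "Some c"] conj_pre[of "Some w"] conj_pre[of None]
        cross_ratio_isom[OF \<gamma>'(1)] .
  qed
  then show ?thesis
    by blast
qed

definition weakly_quasisymmetric :: "real \<Rightarrow> ('a::metric_space \<Rightarrow> 'b::metric_space) \<Rightarrow> bool" where
  "weakly_quasisymmetric K f \<longleftrightarrow> K > 0 \<and> (\<forall>z c w. dist z c \<le> dist w c \<longrightarrow> dist (f z) (f c) \<le> K * dist (f w) (f c))"

lemma weakly_quasisymmetric_of_sq_ratio_bound:
  fixes f :: "'a::metric_space \<Rightarrow> 'b::metric_space"
  assumes "\<And>z c w. dist z c \<le> dist w c \<Longrightarrow> w \<noteq> c \<Longrightarrow> (dist (f z) (f c))\<^sup>2 \<le> B * (dist (f w) (f c))\<^sup>2"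
  shows "weakly_quasisymmetric (sqrt \<bar>B\<bar> + 1) f"
  unfolding weakly_quasisymmetric_def
proof (intro conjI allI impI)
  show "0 < sqrt \<bar>B\<bar> + 1"
    by (simp add: add_nonneg_pos)
  have "(sqrt \<bar>B\<bar> + 1)\<^sup>2 = \<bar>B\<bar> + 2 * sqrt \<bar>B\<bar> + 1"
    by (simp add: power2_sum)
  then have B: "B \<le> (sqrt \<bar>B\<bar> + 1)\<^sup>2"
    using abs_ge_self[of B] real_sqrt_ge_zero[OF abs_ge_zero[of B]] by linarith
  fix z c w :: 'a
  assume close: "dist z c \<le> dist w c"
  show "dist (f z) (f c) \<le> (sqrt \<bar>B\<bar> + 1) * dist (f w) (f c)"
  proof (cases "w = c")
    case False
    then have "(dist (f z) (f c))\<^sup>2 \<le> B * (dist (f w) (f c))\<^sup>2"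
      using assms close by blast
    also have "\<dots> \<le> ((sqrt \<bar>B\<bar> + 1) * dist (f w) (f c))\<^sup>2"
      unfolding power_mult_distrib using B by (rule mult_right_mono) simp
    finally show ?thesis
      by (rule power2_le_imp_le) simp
  qed (use close in simp)
qed

lemma weakly_quasisymmetric_boundary_map:
  assumes h: "homeoS h" "h None = None"
    and "\<Gamma> \<subseteq> isom_grp" "compact D" "D \<subseteq> H3" "(\<Union>\<gamma>\<in>\<Gamma>. fst \<gamma> ` D) = H3"
    and "\<And>\<gamma>. \<gamma> \<in> \<Gamma> \<Longrightarrow> \<exists>\<gamma>'\<in>isom_grp. \<forall>\<xi>. h (snd \<gamma> \<xi>) = snd \<gamma>' (h \<xi>)"
  shows "\<exists>K. weakly_quasisymmetric K (\<lambda>z. the (h (Some z)))"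
proof -
  obtain B where B: "\<forall>z c w. cmod (z - c) \<le> cmod (w - c) \<longrightarrow> w \<noteq> c \<longrightarrow>
      cross_ratio (embS (h (Some z))) (embS (h (Some c))) (embS (h (Some w))) (embS (h None)) \<le> B"
    using boundary_cross_ratio_bounded[OF assms] by blast
  have "inj h"
    using h(1) by (simp add: homeoS_def bij_is_inj)
  define f where "f z = the (h (Some z))" for z
  have hf: "h (Some z) = Some (f z)" for z
    unfolding f_def using \<open>inj h\<close> h(2) by (rule Some_the_of_inj_fix_None)
  have "(dist (f z) (f c))\<^sup>2 \<le> B * (dist (f w) (f c))\<^sup>2" if "dist z c \<le> dist w c" "w \<noteq> c" for z c w
  proof -
    have "f w \<noteq> f c"
      using hf \<open>inj h\<close> \<open>w \<noteq> c\<close> by (metis injD option.inject)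
    moreover have "(cmod (f z - f c))\<^sup>2 / (cmod (f w - f c))\<^sup>2 \<le> B"
      using B that unfolding dist_norm by (simp add: hf h(2) cross_ratio_finite_points del: embS_Some embS_None)
    ultimately show ?thesis
      by (simp add: dist_norm pos_divide_le_eq)
  qed
  then have "weakly_quasisymmetric (sqrt \<bar>B\<bar> + 1) f"
    by (rule weakly_quasisymmetric_of_sq_ratio_bound)
  then show ?thesis
    unfolding f_def by blast
qed

section \<open>Disk packing along a horizontal segment\<close>

lemma weakly_quasisymmetric_ball_image:
  fixes f :: "'a::metric_space \<Rightarrow> 'b::metric_space"
  assumes qs: "weakly_quasisymmetric K f" and "surj f" and xy: "dist x m = \<rho>" "dist y m = \<rho>"
  shows "ball (f m) (dist (f x) (f y) / (2 * K)) \<subseteq> f ` ball m \<rho>"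
proof
  fix q assume q: "q \<in> ball (f m) (dist (f x) (f y) / (2 * K))"
  obtain p where p: "q = f p"
    using \<open>surj f\<close> by (metis surjD)
  have "K > 0" and K: "\<And>z c w. dist z c \<le> dist w c \<Longrightarrow> dist (f z) (f c) \<le> K * dist (f w) (f c)"
    using qs by (auto simp: weakly_quasisymmetric_def)
  show "q \<in> f ` ball m \<rho>"
  proof (rule ccontr)
    assume "q \<notin> f ` ball m \<rho>"
    then have "\<rho> \<le> dist p m"
      using p by (auto simp: dist_commute)
    then have "dist (f x) (f m) \<le> K * dist (f p) (f m)" "dist (f y) (f m) \<le> K * dist (f p) (f m)"
      using xy by (auto intro!: K)
    then have "dist (f x) (f y) \<le> 2 * K * dist (f p) (f m)"
      using dist_triangle2[of "f x" "f y" "f m"] by linarith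
    then have "dist (f x) (f y) / (2 * K) \<le> dist (f m) q"
      using \<open>K > 0\<close> by (simp add: p dist_commute divide_le_eq mult.commute)
    with q show False
      by simp
  qed
qed

lemma weakly_quasisymmetric_bounded_image:
  fixes f :: "complex \<Rightarrow> 'b::metric_space"
  assumes qs: "weakly_quasisymmetric K f" and "bounded S"
  shows "bounded (f ` S)"
proof -
  obtain x \<epsilon> where S: "S \<subseteq> cball x \<epsilon>" "0 \<le> \<epsilon>"
    using \<open>bounded S\<close> bounded_subset_cball by blast
  have "dist (f p) (f x) \<le> K * dist (f (x + of_real \<epsilon>)) (f x)" if "p \<in> S" for p
    using qs S that by (auto simp: weakly_quasisymmetric_def dist_commute dist_norm)
  then have "f ` S \<subseteq> cball (f x) (K * dist (f (x + of_real \<epsilon>)) (f x))"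
    by (auto simp: dist_commute)
  then show ?thesis
    using bounded_cball bounded_subset by blast
qed

lemma disk_alpha_ge_sum:
  fixes n :: nat
  assumes "bounded X"
    and disks: "\<And>i. i < n \<Longrightarrow> 0 < r i \<and> ball (c i) (r i) \<subseteq> X"
    and disjoint: "\<And>i j. i < n \<Longrightarrow> j < n \<Longrightarrow> i \<noteq> j \<Longrightarrow> ball (c i) (r i) \<inter> ball (c j) (r j) = {}"
  shows "(\<Sum>i<n. pi * (r i)\<^sup>2) \<le> disk_alpha X"
  unfolding disk_alpha_def
proof (rule cSup_upper)
  show "(\<Sum>i<n. pi * (r i)\<^sup>2) \<in> {(\<Sum>i<n. pi * (r i)\<^sup>2) | (n::nat) c r. (\<forall>i<n. r i > 0 \<and> ball (c i) (r i) \<subseteq> X) \<and>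
      (\<forall>i<n. \<forall>j<n. i \<noteq> j \<longrightarrow> ball (c i) (r i) \<inter> ball (c j) (r j) = {})}"
    using disks disjoint by blast
  obtain x \<epsilon> where X: "X \<subseteq> cball x \<epsilon>"
    using \<open>bounded X\<close> bounded_subset_cball by blast
  have "(\<Sum>i<n. pi * (r i)\<^sup>2) \<le> measure lborel (cball x \<epsilon>)"
    if disks: "\<forall>i<n. r i > 0 \<and> ball (c i) (r i) \<subseteq> X"
    and disjoint: "\<forall>i<n. \<forall>j<n. i \<noteq> j \<longrightarrow> ball (c i) (r i) \<inter> ball (c j) (r j) = {}"
    for n c and r :: "nat \<Rightarrow> real"
  proof -
    have "(\<Sum>i<n. pi * (r i)\<^sup>2) = (\<Sum>i<n. measure lborel (ball (c i) (r i)))"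
      using disks by (intro sum.cong) (auto simp: content_ball unit_ball_vol_2)
    also have "\<dots> = measure lborel (\<Union>i<n. ball (c i) (r i))"
      using disjoint emeasure_lborel_ball_finite
      by (intro measure_finite_Union[symmetric]) (auto simp: disjoint_family_on_def less_top)
    also have "\<dots> \<le> measure lborel (cball x \<epsilon>)"
      using disks X by (intro measure_mono_fmeasurable) (auto intro!: fmeasurableI emeasure_lborel_cball_finite)
    finally show ?thesis .
  qed
  then show "bdd_above {(\<Sum>i<n. pi * (r i)\<^sup>2) | (n::nat) c r. (\<forall>i<n. r i > 0 \<and> ball (c i) (r i) \<subseteq> X) \<and>
      (\<forall>i<n. \<forall>j<n. i \<noteq> j \<longrightarrow> ball (c i) (r i) \<inter> ball (c j) (r j) = {})}"
    by (auto intro!: bdd_aboveI)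
qed

definition nonoverlapping_intervals :: "real \<Rightarrow> real \<Rightarrow> 'i set \<Rightarrow> ('i \<Rightarrow> real) \<Rightarrow> ('i \<Rightarrow> real) \<Rightarrow> bool" where
  "nonoverlapping_intervals a b I u v \<longleftrightarrow> (\<forall>i\<in>I. a \<le> u i \<and> u i \<le> v i \<and> v i \<le> b)
     \<and> (\<forall>i\<in>I. \<forall>j\<in>I. i \<noteq> j \<longrightarrow> v i \<le> u j \<or> v j \<le> u i)"

lemma rect_eq: "rect J = {p. Re p \<in> {0..1} \<and> Im p \<in> J}"
  unfolding rect_def by (metis complex.exhaust_sel complex.sel)

lemma bounded_rect: "bounded (rect {a..b})"
  unfolding rect_eq by (rule bounded_subset[OF bounded_cbox[of "Complex 0 a" "Complex 1 b"]])
    (auto simp: cbox_complex_eq)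

lemma interval_balls_in_rect:
  fixes y s :: real
  assumes intervals: "nonoverlapping_intervals 0 1 I u v" and short: "\<And>i. i \<in> I \<Longrightarrow> v i - u i \<le> 2 * s"
  defines "B i \<equiv> ball (Complex ((u i + v i) / 2) y) ((v i - u i) / 2)"
  shows "\<And>i. i \<in> I \<Longrightarrow> B i \<subseteq> rect {y - s..y + s}"
    and "\<And>i j. i \<in> I \<Longrightarrow> j \<in> I \<Longrightarrow> i \<noteq> j \<Longrightarrow> B i \<inter> B j = {}"
proof -
  have in_ball: "u i < Re p" "Re p < v i" "y - (v i - u i) / 2 < Im p" "Im p < y + (v i - u i) / 2"
    if "p \<in> B i" for p i
  proof -
    have "\<bar>Re p - (u i + v i) / 2\<bar> < (v i - u i) / 2" "\<bar>Im p - y\<bar> < (v i - u i) / 2"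
      using that abs_Re_le_cmod[of "Complex ((u i + v i) / 2) y - p"] abs_Im_le_cmod[of "Complex ((u i + v i) / 2) y - p"]
      by (auto simp: B_def dist_norm abs_minus_commute)
    then show "u i < Re p" "Re p < v i" "y - (v i - u i) / 2 < Im p" "Im p < y + (v i - u i) / 2"
      unfolding abs_less_iff by (auto simp: field_simps)
  qed
  show "B i \<subseteq> rect {y - s..y + s}" if "i \<in> I" for i
  proof
    fix p assume "p \<in> B i"
    moreover have "0 \<le> u i" "v i \<le> 1" "v i - u i \<le> 2 * s"
      using intervals short that by (auto simp: nonoverlapping_intervals_def)
    ultimately have "0 \<le> Re p" "Re p \<le> 1" "y - s \<le> Im p" "Im p \<le> y + s"
      using in_ball[OF \<open>p \<in> B i\<close>] by (simp_all add: field_simps)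
    then show "p \<in> rect {y - s..y + s}"
      by (simp add: rect_eq)
  qed
  show "B i \<inter> B j = {}" if "i \<in> I" "j \<in> I" "i \<noteq> j" for i j
  proof (rule equals0I)
    fix p assume "p \<in> B i \<inter> B j"
    then have "p \<in> B i" "p \<in> B j"
      by auto
    moreover have "v i \<le> u j \<or> v j \<le> u i"
      using intervals that by (auto simp: nonoverlapping_intervals_def)
    ultimately show False
      using in_ball[OF \<open>p \<in> B i\<close>] in_ball[OF \<open>p \<in> B j\<close>] by (auto simp: field_simps)
  qed
qed

text \<open>The disk of radius \<open>(v - u) / 2\<close> about the midpoint of \<open>[u, v] \<times> {y}\<close> lies in the
  rectangle, and by weak quasisymmetry its image contains the disk of radius
  \<open>|f v - f u| / 2K\<close> about the image of the midpoint.\<close>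

lemma disk_alpha_ge_sum_sq_increments:
  fixes f :: "complex \<Rightarrow> complex" and m :: nat
  assumes qs: "weakly_quasisymmetric K f" and "bij f"
    and s: "0 < s" "s \<le> y" "y + s \<le> 1"
    and intervals: "nonoverlapping_intervals 0 1 {..<m} u v" "\<And>i. i < m \<Longrightarrow> u i < v i \<and> v i - u i \<le> 2 * s"
  shows "pi / (4 * K\<^sup>2) * (\<Sum>i<m. (cmod (f (Complex (v i) y) - f (Complex (u i) y)))\<^sup>2)
    \<le> disk_alpha (f ` rect {y - s..y + s})"
proof -
  have "K > 0"
    using qs by (simp add: weakly_quasisymmetric_def)
  define mid where "mid i = Complex ((u i + v i) / 2) y" for i
  define \<rho> where "\<rho> i = (v i - u i) / 2" for i
  define r where "r i = cmod (f (Complex (v i) y) - f (Complex (u i) y)) / (2 * K)" for i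
  have "v i - u i \<le> 2 * s" if "i \<in> {..<m}" for i
    using intervals(2) that by simp
  note balls = interval_balls_in_rect[OF intervals(1) this, where y = y, folded mid_def \<rho>_def]
  have ball_image: "ball (f (mid i)) (r i) \<subseteq> f ` ball (mid i) (\<rho> i)" if "i < m" for i
  proof -
    have "v i - (u i + v i) / 2 = \<rho> i" "u i - (u i + v i) / 2 = - \<rho> i" "\<rho> i > 0"
      using intervals(2)[OF that] by (simp_all add: \<rho>_def field_simps)
    then have "dist (Complex (v i) y) (mid i) = \<rho> i" "dist (Complex (u i) y) (mid i) = \<rho> i"
      by (simp_all add: mid_def dist_norm cmod_def)
    then show ?thesis
      unfolding r_def dist_norm[symmetric]
      by (rule weakly_quasisymmetric_ball_image[OF qs bij_is_surj[OF \<open>bij f\<close>]])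
  qed
  have "(\<Sum>i<m. pi * (r i)\<^sup>2) \<le> disk_alpha (f ` rect {y - s..y + s})"
  proof (rule disk_alpha_ge_sum)
    show "bounded (f ` rect {y - s..y + s})"
      by (rule weakly_quasisymmetric_bounded_image[OF qs bounded_rect])
    show "0 < r i \<and> ball (f (mid i)) (r i) \<subseteq> f ` rect {y - s..y + s}" if "i < m" for i
      using intervals(2)[OF that] ball_image[OF that] balls(1)[of i] that \<open>K > 0\<close> bij_is_inj[OF \<open>bij f\<close>]
      by (auto simp: r_def inj_eq)
    show "ball (f (mid i)) (r i) \<inter> ball (f (mid j)) (r j) = {}" if "i < m" "j < m" "i \<noteq> j" for i j
    proof -
      have "f ` ball (mid i) (\<rho> i) \<inter> f ` ball (mid j) (\<rho> j) = {}"
        using balls(2)[of i j] that bij_is_inj[OF \<open>bij f\<close>] by (simp add: image_Int[symmetric])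
      then show ?thesis
        using ball_image[OF that(1)] ball_image[OF that(2)] by blast
    qed
  qed
  moreover have "(\<Sum>i<m. pi * (r i)\<^sup>2) = pi / (4 * K\<^sup>2) * (\<Sum>i<m. (cmod (f (Complex (v i) y) - f (Complex (u i) y)))\<^sup>2)"
    by (simp add: r_def sum_distrib_left power_divide power_mult_distrib field_simps)
  ultimately show ?thesis
    by simp
qed

section \<open>Subdivision and absolute continuity\<close>

definition subdivision_point :: "real \<Rightarrow> real \<Rightarrow> nat \<Rightarrow> nat \<Rightarrow> real" where
  "subdivision_point u v k j = u + real j * (v - u) / real k"

lemma subdivision_point_mono:
  "u \<le> v \<Longrightarrow> j \<le> j' \<Longrightarrow> subdivision_point u v k j \<le> subdivision_point u v k j'"
  unfolding subdivision_point_def by (intro add_left_mono divide_right_mono mult_right_mono) auto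

lemma subdivision_point_step:
  "subdivision_point u v k (Suc j) - subdivision_point u v k j = (v - u) / real k"
  by (simp add: subdivision_point_def add_divide_distrib[symmetric] diff_divide_distrib[symmetric] algebra_simps)

lemma subdivision_point_ends:
  "subdivision_point u v k 0 = u" "0 < k \<Longrightarrow> subdivision_point u v k k = v"
  by (simp_all add: subdivision_point_def)

lemma norm_diff_le_sum_subdivision:
  fixes g :: "real \<Rightarrow> 'a::real_normed_vector"
  assumes "0 < k"
  shows "norm (g v - g u)
    \<le> (\<Sum>j<k. norm (g (subdivision_point u v k (Suc j)) - g (subdivision_point u v k j)))"
proof -
  have "g v - g u = (\<Sum>j<k. g (subdivision_point u v k (Suc j)) - g (subdivision_point u v k j))"
    using assms sum_lessThan_telescope[of "\<lambda>j. g (subdivision_point u v k j)" k]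
    by (simp add: subdivision_point_ends)
  then show ?thesis
    by (simp add: norm_sum)
qed

lemma nonoverlapping_intervals_subdivision:
  assumes I: "nonoverlapping_intervals a b I u v" and k: "\<And>i. i \<in> I \<Longrightarrow> 0 < k i"
  shows "nonoverlapping_intervals a b (SIGMA i:I. {..<k i})
    (\<lambda>(i, j). subdivision_point (u i) (v i) (k i) j) (\<lambda>(i, j). subdivision_point (u i) (v i) (k i) (Suc j))"
proof -
  define p where "p i j = subdivision_point (u i) (v i) (k i) j" for i j
  have uv: "a \<le> u i" "u i \<le> v i" "v i \<le> b" if "i \<in> I" for i
    using I that by (auto simp: nonoverlapping_intervals_def)
  have mono: "p i j \<le> p i j'" if "i \<in> I" "j \<le> j'" for i j j'
    unfolding p_def using uv(2)[OF that(1)] that(2) by (rule subdivision_point_mono)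
  have inside: "u i \<le> p i j" "p i (Suc j) \<le> v i" if "i \<in> I" "j < k i" for i j
    using mono[OF that(1), of 0 j] mono[OF that(1), of "Suc j" "k i"] that k
    by (simp_all add: p_def subdivision_point_ends)
  have apart: "p i (Suc j) \<le> p i' j' \<or> p i' (Suc j') \<le> p i j"
    if "i \<in> I" "i' \<in> I" "j < k i" "j' < k i'" "(i, j) \<noteq> (i', j')" for i j i' j'
  proof (cases "i = i'")
    case True
    then have "Suc j \<le> j' \<or> Suc j' \<le> j"
      using that(5) by auto
    then show ?thesis
      using mono that(1) True by blast
  next
    case False
    then have "v i \<le> u i' \<or> v i' \<le> u i"
      using I that(1,2) by (auto simp: nonoverlapping_intervals_def)
    then show ?thesis
      using inside[OF that(1,3)] inside[OF that(2,4)] by auto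
  qed
  have piece: "a \<le> p i j \<and> p i j \<le> p i (Suc j) \<and> p i (Suc j) \<le> b" if "i \<in> I" "j < k i" for i j
    using uv[OF that(1)] inside[OF that] mono[OF that(1), of j "Suc j"] by linarith
  show ?thesis
    unfolding nonoverlapping_intervals_def p_def[symmetric] split_paired_Ball_Sigma case_prod_conv
    using piece apart by blast
qed

lemma nonoverlapping_intervals_reindex:
  "inj_on e J \<Longrightarrow> e ` J \<subseteq> X \<Longrightarrow> nonoverlapping_intervals a b X u v
    \<Longrightarrow> nonoverlapping_intervals a b J (u \<circ> e) (v \<circ> e)"
  unfolding nonoverlapping_intervals_def inj_on_def by (simp add: subset_iff) blast

lemma subdivision_count:
  assumes "0 < s" "2 * s \<le> l" "N = nat \<lceil>l / (2 * s)\<rceil>"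
  shows "0 < N" "real N \<le> l / s" "l / real N \<le> 2 * s"
proof -
  have ge1: "1 \<le> l / (2 * s)"
    using assms by simp
  have "real N = of_int \<lceil>l / (2 * s)\<rceil>"
    using ge1 unfolding assms(3) by (simp add: ceiling_le_zero)
  then have N: "l / (2 * s) \<le> real N" "real N \<le> l / (2 * s) + 1"
    by (simp_all add: le_of_int_ceiling of_int_ceiling_le_add_one)
  show "0 < N"
    using ge1 N(1) by linarith
  have "l / (2 * s) + 1 \<le> l / s"
    using ge1 assms(1) by (simp add: field_simps)
  with N(2) show "real N \<le> l / s"
    by linarith
  have "l \<le> real N * (2 * s)"
    using N(1) assms(1) by (simp add: pos_divide_le_eq)
  then show "l / real N \<le> 2 * s"
    using \<open>0 < N\<close> by (simp add: pos_divide_le_eq mult.commute)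
qed

text \<open>Each interval is cut into \<open>\<lceil>(v - u) / 2s\<rceil>\<close> equal pieces of length at most \<open>2s\<close>; there
  are at most \<open>\<Sum> (v - u) / s\<close> pieces, and Cauchy-Schwarz does the rest.\<close>

lemma sq_variation_le_at_scale:
  fixes g :: "real \<Rightarrow> 'a::real_normed_vector" and J :: "'i set"
  assumes scale: "\<And>(m::nat) u' v'. nonoverlapping_intervals a b {..<m} u' v' \<Longrightarrow>
      (\<And>j. j < m \<Longrightarrow> u' j < v' j \<and> v' j - u' j \<le> 2 * s) \<Longrightarrow>
      (\<Sum>j<m. (norm (g (v' j) - g (u' j)))\<^sup>2) \<le> C * s"
    and "0 < s" "finite J" and J: "nonoverlapping_intervals a b J u v"
    and long: "\<And>i. i \<in> J \<Longrightarrow> 2 * s \<le> v i - u i"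
  shows "(\<Sum>i\<in>J. norm (g (v i) - g (u i)))\<^sup>2 \<le> C * (\<Sum>i\<in>J. v i - u i)"
proof -
  define k where "k i = nat \<lceil>(v i - u i) / (2 * s)\<rceil>" for i
  note k = subdivision_count[OF \<open>0 < s\<close> long k_def]
  define X where "X = (SIGMA i:J. {..<k i})"
  define lo where "lo = (\<lambda>(i, j). subdivision_point (u i) (v i) (k i) j)"
  define hi where "hi = (\<lambda>(i, j). subdivision_point (u i) (v i) (k i) (Suc j))"
  define d where "d x = norm (g (hi x) - g (lo x))" for x
  have "finite X"
    using \<open>finite J\<close> by (simp add: X_def)
  have pieces: "lo x < hi x \<and> hi x - lo x \<le> 2 * s" if "x \<in> X" for x
  proof -
    obtain i j where x: "x = (i, j)" and "i \<in> J"
      using \<open>x \<in> X\<close> by (auto simp: X_def)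
    then have "hi x - lo x = (v i - u i) / real (k i)" "0 < (v i - u i) / real (k i)"
      using k(1) long[of i] \<open>0 < s\<close> by (simp_all add: lo_def hi_def subdivision_point_step)
    then show ?thesis
      using k(3)[OF \<open>i \<in> J\<close>] by simp
  qed
  obtain e where e: "bij_betw e {..<card X} X"
    using ex_bij_betw_nat_finite[OF \<open>finite X\<close>] by (auto simp: atLeast0LessThan)
  have "(\<Sum>x\<in>X. (d x)\<^sup>2) = (\<Sum>j<card X. (norm (g ((hi \<circ> e) j) - g ((lo \<circ> e) j)))\<^sup>2)"
    using sum.reindex_bij_betw[OF e, of "\<lambda>x. (d x)\<^sup>2"] by (simp add: d_def)
  also have "\<dots> \<le> C * s"
  proof (rule scale)
    have "nonoverlapping_intervals a b X lo hi"
      unfolding X_def lo_def hi_def by (rule nonoverlapping_intervals_subdivision[OF J k(1)])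
    then show "nonoverlapping_intervals a b {..<card X} (lo \<circ> e) (hi \<circ> e)"
      using e by (intro nonoverlapping_intervals_reindex) (auto simp: bij_betw_def)
    show "(lo \<circ> e) j < (hi \<circ> e) j \<and> (hi \<circ> e) j - (lo \<circ> e) j \<le> 2 * s" if "j < card X" for j
      using pieces[OF bij_betwE[OF e, rule_format, of j]] that by simp
  qed
  finally have sq: "(\<Sum>x\<in>X. (d x)\<^sup>2) \<le> C * s" .
  have "real (card X) = (\<Sum>i\<in>J. real (k i))"
    using \<open>finite J\<close> by (simp add: X_def card_SigmaI)
  also have "\<dots> \<le> (\<Sum>i\<in>J. (v i - u i) / s)"
    by (intro sum_mono k(2))
  finally have card: "real (card X) \<le> (\<Sum>i\<in>J. v i - u i) / s"
    by (simp add: sum_divide_distrib)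
  have "(\<Sum>i\<in>J. norm (g (v i) - g (u i))) \<le> (\<Sum>i\<in>J. \<Sum>j<k i. d (i, j))"
    using k(1) by (intro sum_mono) (simp add: d_def lo_def hi_def norm_diff_le_sum_subdivision)
  also have "\<dots> = (\<Sum>x\<in>X. d x)"
    using \<open>finite J\<close> by (simp add: X_def sum.Sigma)
  finally have "(\<Sum>i\<in>J. norm (g (v i) - g (u i)))\<^sup>2 \<le> (\<Sum>x\<in>X. d x)\<^sup>2"
    by (rule power_mono) (auto intro: sum_nonneg)
  also have "\<dots> \<le> real (card X) * (\<Sum>x\<in>X. (d x)\<^sup>2)"
    using Cauchy_Schwarz_ineq_sum[of "\<lambda>_. 1" d X] by simp
  also have "\<dots> \<le> ((\<Sum>i\<in>J. v i - u i) / s) * (C * s)"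
    using \<open>0 < s\<close> long by (intro mult_mono[OF card sq] divide_nonneg_pos sum_nonneg) force+
  also have "\<dots> = C * (\<Sum>i\<in>J. v i - u i)"
    using \<open>0 < s\<close> by simp
  finally show ?thesis .
qed

lemma sq_variation_le_of_scale_bound:
  fixes g :: "real \<Rightarrow> 'a::real_normed_vector" and I :: "'i set"
  assumes "0 < s0"
    and scale: "\<And>s (m::nat) u' v'. 0 < s \<Longrightarrow> s \<le> s0 \<Longrightarrow> nonoverlapping_intervals a b {..<m} u' v' \<Longrightarrow>
      (\<And>j. j < m \<Longrightarrow> u' j < v' j \<and> v' j - u' j \<le> 2 * s) \<Longrightarrow>
      (\<Sum>j<m. (norm (g (v' j) - g (u' j)))\<^sup>2) \<le> C * s"
    and "finite I" and I: "nonoverlapping_intervals a b I u v"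
  shows "(\<Sum>i\<in>I. norm (g (v i) - g (u i)))\<^sup>2 \<le> C * (\<Sum>i\<in>I. v i - u i)"
proof -
  define J where "J = {i \<in> I. u i < v i}"
  have "finite J" and "J \<subseteq> I"
    using \<open>finite I\<close> by (auto simp: J_def)
  have "u i = v i" if "i \<in> I - J" for i
    using I that by (force simp: J_def nonoverlapping_intervals_def)
  then have sums: "(\<Sum>i\<in>I. norm (g (v i) - g (u i))) = (\<Sum>i\<in>J. norm (g (v i) - g (u i)))"
    "(\<Sum>i\<in>I. v i - u i) = (\<Sum>i\<in>J. v i - u i)"
    using \<open>finite I\<close> \<open>J \<subseteq> I\<close> by (auto intro!: sum.mono_neutral_right)
  show ?thesis
  proof (cases "J = {}")
    case True
    then show ?thesis
      unfolding sums by simp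
  next
    case False
    define s where "s = min s0 (Min ((\<lambda>i. v i - u i) ` J) / 2)"
    have "0 < s" "s \<le> s0"
      using \<open>0 < s0\<close> \<open>finite J\<close> False by (auto simp: s_def J_def)
    have long: "2 * s \<le> v i - u i" if "i \<in> J" for i
    proof -
      have "Min ((\<lambda>i. v i - u i) ` J) \<le> v i - u i"
        using \<open>finite J\<close> that by simp
      moreover have "s \<le> Min ((\<lambda>i. v i - u i) ` J) / 2"
        unfolding s_def by (rule min.cobounded2)
      ultimately show ?thesis
        by linarith
    qed
    have J: "nonoverlapping_intervals a b J u v"
      using I \<open>J \<subseteq> I\<close> by (auto simp: nonoverlapping_intervals_def)
    show ?thesis
      unfolding sums by (rule sq_variation_le_at_scale[OF scale[OF \<open>0 < s\<close> \<open>s \<le> s0\<close>] \<open>0 < s\<close> \<open>finite J\<close> J long])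
  qed
qed

lemma abs_cont_on_iff_nonoverlapping:
  "abs_cont_on a b f \<longleftrightarrow> (\<forall>\<epsilon>>0. \<exists>\<delta>>0. \<forall>(n::nat) u v.
    nonoverlapping_intervals a b {..<n} u v \<and> (\<Sum>i<n. v i - u i) < \<delta> \<longrightarrow> (\<Sum>i<n. \<bar>f (v i) - f (u i)\<bar>) < \<epsilon>)"
  unfolding abs_cont_on_def nonoverlapping_intervals_def by (simp add: Ball_def)

lemma abs_cont_on_linear_of_sq_variation_bound:
  fixes g :: "real \<Rightarrow> 'a::euclidean_space" and \<pi> :: "'a \<Rightarrow> real"
  assumes "linear \<pi>"
    and bound: "\<And>(n::nat) u v. nonoverlapping_intervals a b {..<n} u v \<Longrightarrow>
      (\<Sum>i<n. norm (g (v i) - g (u i)))\<^sup>2 \<le> C * (\<Sum>i<n. v i - u i)"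
  shows "abs_cont_on a b (\<lambda>t. \<pi> (g t))"
  unfolding abs_cont_on_iff_nonoverlapping
proof (intro allI impI)
  fix \<epsilon> :: real assume "\<epsilon> > 0"
  obtain M where "M > 0" and M: "\<And>x. norm (\<pi> x) \<le> M * norm x"
    using linear_bounded_pos[OF \<open>linear \<pi>\<close>] by blast
  define \<delta> where "\<delta> = (\<epsilon> / M)\<^sup>2 / (\<bar>C\<bar> + 1)"
  have "\<delta> > 0"
    using \<open>\<epsilon> > 0\<close> \<open>M > 0\<close> by (simp add: \<delta>_def)
  moreover have "(\<Sum>i<n. \<bar>\<pi> (g (v i)) - \<pi> (g (u i))\<bar>) < \<epsilon>"
    if intervals: "nonoverlapping_intervals a b {..<n} u v" and "(\<Sum>i<n. v i - u i) < \<delta>" for n :: nat and u v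
  proof -
    define S where "S = (\<Sum>i<n. norm (g (v i) - g (u i)))"
    have "0 \<le> (\<Sum>i<n. v i - u i)"
      using intervals by (auto simp: nonoverlapping_intervals_def intro: sum_nonneg)
    then have "C * (\<Sum>i<n. v i - u i) \<le> (\<bar>C\<bar> + 1) * (\<Sum>i<n. v i - u i)"
      by (rule mult_right_mono[rotated]) linarith
    then have "S\<^sup>2 \<le> (\<bar>C\<bar> + 1) * (\<Sum>i<n. v i - u i)"
      using bound[OF intervals] unfolding S_def by linarith
    also have "\<dots> < (\<bar>C\<bar> + 1) * \<delta>"
      by (rule mult_strict_left_mono) (use that in auto)
    also have "\<dots> = (\<epsilon> / M)\<^sup>2"
      by (simp add: \<delta>_def)
    finally have "S < \<epsilon> / M"
      by (rule power2_less_imp_less) (use \<open>\<epsilon> > 0\<close> \<open>M > 0\<close> in simp)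
    have "\<bar>\<pi> (g (v i)) - \<pi> (g (u i))\<bar> \<le> M * norm (g (v i) - g (u i))" for i
      using M[of "g (v i) - g (u i)"] by (simp add: linear_diff[OF \<open>linear \<pi>\<close>])
    then have "(\<Sum>i<n. \<bar>\<pi> (g (v i)) - \<pi> (g (u i))\<bar>) \<le> M * S"
      by (simp add: S_def sum_distrib_left sum_mono)
    also have "\<dots> < \<epsilon>"
      using \<open>S < \<epsilon> / M\<close> \<open>M > 0\<close> by (simp add: field_simps)
    finally show ?thesis .
  qed
  ultimately show "\<exists>\<delta>>0. \<forall>(n::nat) u v. nonoverlapping_intervals a b {..<n} u v \<and> (\<Sum>i<n. v i - u i) < \<delta> \<longrightarrow>
      (\<Sum>i<n. \<bar>\<pi> (g (v i)) - \<pi> (g (u i))\<bar>) < \<epsilon>"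
    by auto
qed

lemma stiff_point_sq_variation_bound:
  fixes f :: "complex \<Rightarrow> complex"
  assumes qs: "weakly_quasisymmetric K f" and "bij f" and y: "0 < y" "y < 1"
    and stiff: "stiff_point (\<lambda>J. disk_alpha (f ` rect J)) y"
  shows "\<exists>C. \<forall>(n::nat) u v. nonoverlapping_intervals 0 1 {..<n} u v \<longrightarrow>
    (\<Sum>i<n. norm (f (Complex (v i) y) - f (Complex (u i) y)))\<^sup>2 \<le> C * (\<Sum>i<n. v i - u i)"
proof -
  obtain N where N0: "\<not> (\<exists>a b. 0 \<le> a \<and> a < b \<and> b \<le> 1 \<and> (a + b) / 2 = y
      \<and> disk_alpha (f ` rect {a..b}) \<ge> N * (b - a))"
    using stiff unfolding stiff_point_def by blast
  have N: "disk_alpha (f ` rect {a..b}) < N * (b - a)" if "0 \<le> a" "a < b" "b \<le> 1" "(a + b) / 2 = y" for a b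
  proof -
    have "\<not> disk_alpha (f ` rect {a..b}) \<ge> N * (b - a)"
      using N0 that by blast
    then show ?thesis
      by simp
  qed
  have "K > 0"
    using qs by (simp add: weakly_quasisymmetric_def)
  have scale: "(\<Sum>j<m. (norm (f (Complex (v j) y) - f (Complex (u j) y)))\<^sup>2) \<le> (8 * K\<^sup>2 * \<bar>N\<bar> / pi) * s"
    if "0 < s" "s \<le> min y (1 - y)" "nonoverlapping_intervals 0 1 {..<m} u v"
      and "\<And>j. j < m \<Longrightarrow> u j < v j \<and> v j - u j \<le> 2 * s" for s and m :: nat and u v
  proof -
    have "pi / (4 * K\<^sup>2) * (\<Sum>j<m. (cmod (f (Complex (v j) y) - f (Complex (u j) y)))\<^sup>2)
        \<le> disk_alpha (f ` rect {y - s..y + s})"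
      using that by (intro disk_alpha_ge_sum_sq_increments[OF qs \<open>bij f\<close>]) auto
    also have "\<dots> < N * (2 * s)"
      using N[of "y - s" "y + s"] that(1,2) by simp
    also have "\<dots> \<le> \<bar>N\<bar> * (2 * s)"
      by (rule mult_right_mono) (use that(1) in auto)
    finally show ?thesis
      using \<open>K > 0\<close> by (simp add: field_simps)
  qed
  have "0 < min y (1 - y)"
    using y by simp
  show ?thesis
    by (intro exI[of _ "8 * K\<^sup>2 * \<bar>N\<bar> / pi"] allI impI
        sq_variation_le_of_scale_bound[OF \<open>0 < min y (1 - y)\<close> scale finite_lessThan])
qed

lemma equivariant_pair_weakly_quasisymmetric:
  assumes "equivariant_pair H h" "h None = None"
  shows "\<exists>K. weakly_quasisymmetric K (\<lambda>z. the (h (Some z)))"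
proof -
  obtain \<Gamma>1 \<Gamma>2 where "nice_lattice \<Gamma>1" "nice_lattice \<Gamma>2" and conj: "\<forall>\<gamma>\<in>\<Gamma>1. \<exists>\<gamma>'\<in>\<Gamma>2. conj_rel H h \<gamma> \<gamma>'"
    using assms(1) unfolding equivariant_pair_def by blast
  then have \<Gamma>: "\<Gamma>1 \<subseteq> isom_grp" "\<Gamma>2 \<subseteq> isom_grp"
    and "\<exists>D. compact D \<and> D \<subseteq> H3 \<and> (\<Union>\<gamma>\<in>\<Gamma>1. fst \<gamma> ` D) = H3"
    by (simp_all add: nice_lattice_def)
  then obtain D where D: "compact D" "D \<subseteq> H3" "(\<Union>\<gamma>\<in>\<Gamma>1. fst \<gamma> ` D) = H3"
    by blast
  have "homeoS h"
    using assms(1) by (simp add: equivariant_pair_def)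
  have boundary_conj: "\<exists>\<gamma>'\<in>isom_grp. \<forall>\<xi>. h (snd \<gamma> \<xi>) = snd \<gamma>' (h \<xi>)" if "\<gamma> \<in> \<Gamma>1" for \<gamma>
    using conj \<Gamma>(2) that unfolding conj_rel_def by blast
  show ?thesis
    by (rule weakly_quasisymmetric_boundary_map[OF \<open>homeoS h\<close> assms(2) \<Gamma>(1) D boundary_conj])
qed

theorem theorem3p7:
  fixes H :: "complex \<times> real \<Rightarrow> complex \<times> real"
    and h :: "complex option \<Rightarrow> complex option"
    and y :: real
    and \<pi> :: "complex \<Rightarrow> real"
  assumes "equivariant_pair H h"
    and "h None = None"
    and "0 < y" and "y < 1"
    and "stiff_point (\<lambda>J. disk_alpha ((\<lambda>z. the (h (Some z))) ` rect J)) y"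
    and "linear \<pi>"
  shows "abs_cont_on 0 1 (\<lambda>t. \<pi> (the (h (Some (Complex t y)))))"
proof -
  define f where "f z = the (h (Some z))" for z
  obtain K where qs: "weakly_quasisymmetric K f"
    using equivariant_pair_weakly_quasisymmetric[OF assms(1,2)] unfolding f_def[abs_def] by blast
  have "bij h"
    using assms(1) by (simp add: equivariant_pair_def homeoS_def)
  then have "bij f"
    unfolding f_def using assms(2) by (rule bij_the_Some)
  have "stiff_point (\<lambda>J. disk_alpha (f ` rect J)) y"
    unfolding f_def[abs_def] by (rule assms(5))
  then have "\<exists>C. \<forall>(n::nat) u v. nonoverlapping_intervals 0 1 {..<n} u v \<longrightarrow>
      (\<Sum>i<n. norm (f (Complex (v i) y) - f (Complex (u i) y)))\<^sup>2 \<le> C * (\<Sum>i<n. v i - u i)"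
    by (rule stiff_point_sq_variation_bound[OF qs \<open>bij f\<close> assms(3,4)])
  then obtain C where C: "\<forall>(n::nat) u v. nonoverlapping_intervals 0 1 {..<n} u v \<longrightarrow>
      (\<Sum>i<n. norm (f (Complex (v i) y) - f (Complex (u i) y)))\<^sup>2 \<le> C * (\<Sum>i<n. v i - u i)"
    by blast
  have "abs_cont_on 0 1 (\<lambda>t. \<pi> (f (Complex t y)))"
    by (rule abs_cont_on_linear_of_sq_variation_bound[OF assms(6) C[rule_format]])
  then show ?thesis
    by (simp add: f_def)
qed

end
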